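(* For a regular dimension-reduced canonical form, the infimal value $\underline L^*$ and solution set $\widehat W$ are as follows. (a) If the problem is non-Lagrangian, then $W_\circ=W_1=\emptyset$, $W=\{0_q\}$, and $\underline L^*=\sum_{i=1}^q\gamma_i^{-2}l_i^2>0$ is attained on $\widehat W=\{0_q\}$. (b) If it is multiply-Lagrangian, then $\underline L^*=0$, attained on $\widehat W=W_\circ=W_1=\{0_q\}$, and also $W_q=\{0_q\}$ when $\gamma_q<0$. (c) If it is singly-Lagrangian, then $\widehat W$ is the unique nonempty member of $\{W_\circ,W_1,W_q\}$ (with $W_q$ considered only if $\gamma_q<0$). Specifically: if $\gamma_q>0$, then $\underline f<0$, and $\widehat W=W_\circ$ if $\overline f>0$, $\widehat W=W_1$ if $\overline f\le0$; if $\gamma_q<0$, then $\widehat W=W_\circ$, $W_1$ or $W_q$ according as $\underline f<0<\overline f$, $\overline f\le0$, or $\underline f\ge0$. When $\widehat W=W_\circ$: $\underline L^*=\hat\lambda^2\{l_0^2+\sum_{i=1}^q(1-\hat\lambda\gamma_i)^{-2}l_i^2\}$, attained uniquely at $w=w(\hat\lambda)$, where $\hat\lambda$ is the unique solution of $f(\lambda)=0$ in $\Lambda^\circ$. When $\widehat W=W_1$: $\underline L^*=\gamma_1^{-2}\{l_0^2+\sum_{i=2}^q(1-\gamma_i/\gamma_1)^{-2}l_i^2\}+\zeta_1^2$, attained at $w=(\hat y_1,\pm\zeta_1,\hat z_{(1)}^\top)^\top$, where $\zeta_1=\sqrt{-f_1/\gamma_1}\ge0$. When $\widehat W=W_q$: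 $\underline L^*=\gamma_q^{-2}\{l_0^2+\sum_{i=1}^{q-1}(1-\gamma_i/\gamma_q)^{-2}l_i^2\}+\zeta_q^2$, attained at $w=(\hat y_q,\hat z_{(q)}^\top,\pm\zeta_q)^\top$, where $\zeta_q=\sqrt{f_q/(-\gamma_q)}\ge0$. (Coordinates $\hat y_1,\hat y_q$ are absent when $m_0=0$.)
   Context: Regular dimension-reduced canonical form: $q\ge1$, $\gamma_1>\dots>\gamma_q$ nonzero reals with $\gamma_1>0$, $\Gamma^*=\operatorname{diag}(\gamma_1,\dots,\gamma_q)$, $\delta=(\delta_i)$ with $\delta_i\ge0$, $k^*\in\mathbb{R}$, $\varepsilon\ge0$; either ($m_0=0$) $\varepsilon=0$, $w=z\in\mathbb{R}^q$, $w_0=\delta$, $\Delta=\Gamma^*$, $d=0$; or ($m_0>0$) $\varepsilon>0$, $w=(y,z^\top)^\top\in\mathbb{R}^{q+1}$, $w_0=(0,\delta^\top)^\top$, $\Delta=\operatorname{diag}(0,\Gamma^* )$, $d=\varepsilon e_1$. Problem: minimise $L^*(w)=\|w-w_0\|^2$ over $W=\{w:Q^*(w)=0\}\neq\emptyset$, $Q^*(w)=w^\top\Delta w+2d^\top w-k^*$; $\underline L^*=\inf_WL^*$, $\widehat W$ the set of minimisers. Let $l_0=\varepsilon$ and $l_i=|\gamma_i|\delta_i$. Admissible region $\Lambda=(-\infty,\gamma_1^{-1}]$ if $\gamma_q>0$, $[\gamma_q^{-1},\gamma_1^{-1}]$ if $\gamma_q<0$; $\Lambda^\circ$ its interior. $W(\lambda)$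 is the set of $w\in W$ with $(I-\lambda\Delta)w=w_0+\lambda d$; $W_\circ=\bigcup_{\lambda\in\Lambda^\circ}W(\lambda)$, $W_1=W(\gamma_1^{-1})$, and (only if $\gamma_q<0$) $W_q=W(\gamma_q^{-1})$. For $\lambda\in\Lambda^\circ$: $w(\lambda)=(I-\lambda\Delta)^{-1}(w_0+\lambda d)$, $f(\lambda)=\sum_{i=1}^q(1-\lambda\gamma_i)^{-2}\gamma_i\delta_i^2+2\varepsilon^2\lambda-k^*$; $\underline f=\inf_{\Lambda^\circ}f$, $\overline f=\sup_{\Lambda^\circ}f$. Boundary quantities: $\hat y_1=\varepsilon\gamma_1^{-1}$, $\hat z_{(1)}\in\mathbb{R}^{q-1}$ with entries $(1-\gamma_i/\gamma_1)^{-1}\delta_i$ ($i=2,\dots,q$), $f_1=\sum_{i=2}^q\gamma_i(\hat z_{(1)})_i^2+2\varepsilon\hat y_1-k^*$; when $\gamma_q<0$: $\hat y_q=\varepsilon\gamma_q^{-1}$, $\hat z_{(q)}$ with entries $(1-\gamma_i/\gamma_q)^{-1}\delta_i$ ($i=1,\dots,q-1$), $f_q=\sum_{i=1}^{q-1}\gamma_i(\hat z_{(q)})_i^2+2\varepsilon\hat y_q-k^*$. The problem is non-Lagrangian if $m_0=0$, $k^*=0$, $\delta\neq0_q$ and $\gamma_q>0$; multiply-Lagrangian if $m_0=0$, $k^*=0$ and $\delta=0_q$; singly-Lagrangian otherwise. *)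

theory Defs
  imports "HOL-Analysis.Analysis"
begin

text \<open>Index 0 is the y-coordinate
 (present only when m0 > 0, i.e. eps > 0), indices 1..q are the z-coordinates.\<close>

definition Jset :: "nat \<Rightarrow> real \<Rightarrow> nat set" where
  "Jset q eps = (if eps = 0 then {1..q} else {0..q})"

definition Vsp :: "nat \<Rightarrow> real \<Rightarrow> (nat \<Rightarrow> real) set" where
  "Vsp q eps = {w. \<forall>i. i \<notin> Jset q eps \<longrightarrow> w i = 0}"

text \<open>w_0 = (0, delta), diagonal of Delta = (0, Gamma), d = eps e_1.\<close>
definition w0v :: "nat \<Rightarrow> (nat \<Rightarrow> real) \<Rightarrow> nat \<Rightarrow> real" where
  "w0v q \<delta> i = (if 1 \<le> i \<and> i \<le> q then \<delta> i else 0)"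

definition Dlt :: "nat \<Rightarrow> (nat \<Rightarrow> real) \<Rightarrow> nat \<Rightarrow> real" where
  "Dlt q \<gamma> i = (if 1 \<le> i \<and> i \<le> q then \<gamma> i else 0)"

definition dv :: "real \<Rightarrow> nat \<Rightarrow> real" where
  "dv eps i = (if i = 0 then eps else 0)"

definition Qf :: "nat \<Rightarrow> (nat \<Rightarrow> real) \<Rightarrow> real \<Rightarrow> real \<Rightarrow> (nat \<Rightarrow> real) \<Rightarrow> real" where
  "Qf q \<gamma> eps k w = (\<Sum>i\<in>Jset q eps. Dlt q \<gamma> i * (w i)^2) + 2 * (\<Sum>i\<in>Jset q eps. dv eps i * w i) - k"

definition Lf :: "nat \<Rightarrow> (nat \<Rightarrow> real) \<Rightarrow> real \<Rightarrow> (nat \<Rightarrow> real) \<Rightarrow> real" where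
  "Lf q \<delta> eps w = (\<Sum>i\<in>Jset q eps. (w i - w0v q \<delta> i)^2)"

definition Wset :: "nat \<Rightarrow> (nat \<Rightarrow> real) \<Rightarrow> real \<Rightarrow> real \<Rightarrow> (nat \<Rightarrow> real) set" where
  "Wset q \<gamma> eps k = {w \<in> Vsp q eps. Qf q \<gamma> eps k w = 0}"

definition Linf :: "nat \<Rightarrow> (nat \<Rightarrow> real) \<Rightarrow> (nat \<Rightarrow> real) \<Rightarrow> real \<Rightarrow> real \<Rightarrow> real" where
  "Linf q \<gamma> \<delta> eps k = Inf (Lf q \<delta> eps ` Wset q \<gamma> eps k)"

definition What :: "nat \<Rightarrow> (nat \<Rightarrow> real) \<Rightarrow> (nat \<Rightarrow> real) \<Rightarrow> real \<Rightarrow> real \<Rightarrow> (nat \<Rightarrow> real) set" where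
  "What q \<gamma> \<delta> eps k = {w \<in> Wset q \<gamma> eps k. Lf q \<delta> eps w = Linf q \<gamma> \<delta> eps k}"

definition LamSet :: "nat \<Rightarrow> (nat \<Rightarrow> real) \<Rightarrow> real set" where
  "LamSet q \<gamma> = (if \<gamma> q > 0 then {..inverse (\<gamma> 1)} else {inverse (\<gamma> q)..inverse (\<gamma> 1)})"

definition Wlam :: "nat \<Rightarrow> (nat \<Rightarrow> real) \<Rightarrow> (nat \<Rightarrow> real) \<Rightarrow> real \<Rightarrow> real \<Rightarrow> real \<Rightarrow> (nat \<Rightarrow> real) set" where
  "Wlam q \<gamma> \<delta> eps k lam = {w \<in> Wset q \<gamma> eps k.
     \<forall>i\<in>Jset q eps. (1 - lam * Dlt q \<gamma> i) * w i = w0v q \<delta> i + lam * dv eps i}"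

definition Wcirc :: "nat \<Rightarrow> (nat \<Rightarrow> real) \<Rightarrow> (nat \<Rightarrow> real) \<Rightarrow> real \<Rightarrow> real \<Rightarrow> (nat \<Rightarrow> real) set" where
  "Wcirc q \<gamma> \<delta> eps k = (\<Union>lam\<in>interior (LamSet q \<gamma>). Wlam q \<gamma> \<delta> eps k lam)"

definition W1 :: "nat \<Rightarrow> (nat \<Rightarrow> real) \<Rightarrow> (nat \<Rightarrow> real) \<Rightarrow> real \<Rightarrow> real \<Rightarrow> (nat \<Rightarrow> real) set" where
  "W1 q \<gamma> \<delta> eps k = Wlam q \<gamma> \<delta> eps k (inverse (\<gamma> 1))"

definition Wq :: "nat \<Rightarrow> (nat \<Rightarrow> real) \<Rightarrow> (nat \<Rightarrow> real) \<Rightarrow> real \<Rightarrow> real \<Rightarrow> (nat \<Rightarrow> real) set" where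
  "Wq q \<gamma> \<delta> eps k = Wlam q \<gamma> \<delta> eps k (inverse (\<gamma> q))"

definition wlam :: "nat \<Rightarrow> (nat \<Rightarrow> real) \<Rightarrow> (nat \<Rightarrow> real) \<Rightarrow> real \<Rightarrow> real \<Rightarrow> nat \<Rightarrow> real" where
  "wlam q \<gamma> \<delta> eps lam i =
     (if i \<in> Jset q eps then inverse (1 - lam * Dlt q \<gamma> i) * (w0v q \<delta> i + lam * dv eps i) else 0)"

definition ff :: "nat \<Rightarrow> (nat \<Rightarrow> real) \<Rightarrow> (nat \<Rightarrow> real) \<Rightarrow> real \<Rightarrow> real \<Rightarrow> real \<Rightarrow> real" where
  "ff q \<gamma> \<delta> eps k lam =
     (\<Sum>i=1..q. inverse ((1 - lam * \<gamma> i)^2) * \<gamma> i * (\<delta> i)^2) + 2 * eps^2 * lam - k"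

definition finf :: "nat \<Rightarrow> (nat \<Rightarrow> real) \<Rightarrow> (nat \<Rightarrow> real) \<Rightarrow> real \<Rightarrow> real \<Rightarrow> ereal" where
  "finf q \<gamma> \<delta> eps k = (INF lam\<in>interior (LamSet q \<gamma>). ereal (ff q \<gamma> \<delta> eps k lam))"

definition fsup :: "nat \<Rightarrow> (nat \<Rightarrow> real) \<Rightarrow> (nat \<Rightarrow> real) \<Rightarrow> real \<Rightarrow> real \<Rightarrow> ereal" where
  "fsup q \<gamma> \<delta> eps k = (SUP lam\<in>interior (LamSet q \<gamma>). ereal (ff q \<gamma> \<delta> eps k lam))"

definition lc :: "(nat \<Rightarrow> real) \<Rightarrow> (nat \<Rightarrow> real) \<Rightarrow> real \<Rightarrow> nat \<Rightarrow> real" where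
  "lc \<gamma> \<delta> eps i = (if i = 0 then eps else \<bar>\<gamma> i\<bar> * \<delta> i)"

text \<open>Boundary quantities at lambda = 1/gamma_1.\<close>
definition yhat1 :: "(nat \<Rightarrow> real) \<Rightarrow> real \<Rightarrow> real" where
  "yhat1 \<gamma> eps = eps * inverse (\<gamma> 1)"

definition zhat1 :: "(nat \<Rightarrow> real) \<Rightarrow> (nat \<Rightarrow> real) \<Rightarrow> nat \<Rightarrow> real" where
  "zhat1 \<gamma> \<delta> i = inverse (1 - \<gamma> i / \<gamma> 1) * \<delta> i"

definition f1 :: "nat \<Rightarrow> (nat \<Rightarrow> real) \<Rightarrow> (nat \<Rightarrow> real) \<Rightarrow> real \<Rightarrow> real \<Rightarrow> real" where
  "f1 q \<gamma> \<delta> eps k = (\<Sum>i=2..q. \<gamma> i * (zhat1 \<gamma> \<delta> i)^2) + 2 * eps * yhat1 \<gamma> eps - k"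

definition pt1 :: "nat \<Rightarrow> (nat \<Rightarrow> real) \<Rightarrow> (nat \<Rightarrow> real) \<Rightarrow> real \<Rightarrow> real \<Rightarrow> nat \<Rightarrow> real" where
  "pt1 q \<gamma> \<delta> eps s i =
     (if i = 0 then (if eps = 0 then 0 else yhat1 \<gamma> eps)
      else if i = 1 then s
      else if 2 \<le> i \<and> i \<le> q then zhat1 \<gamma> \<delta> i else 0)"

text \<open>Boundary quantities at lambda = 1/gamma_q.\<close>
definition yhatq :: "nat \<Rightarrow> (nat \<Rightarrow> real) \<Rightarrow> real \<Rightarrow> real" where
  "yhatq q \<gamma> eps = eps * inverse (\<gamma> q)"

definition zhatq :: "nat \<Rightarrow> (nat \<Rightarrow> real) \<Rightarrow> (nat \<Rightarrow> real) \<Rightarrow> nat \<Rightarrow> real" where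
  "zhatq q \<gamma> \<delta> i = inverse (1 - \<gamma> i / \<gamma> q) * \<delta> i"

definition fq :: "nat \<Rightarrow> (nat \<Rightarrow> real) \<Rightarrow> (nat \<Rightarrow> real) \<Rightarrow> real \<Rightarrow> real \<Rightarrow> real" where
  "fq q \<gamma> \<delta> eps k = (\<Sum>i=1..q-1. \<gamma> i * (zhatq q \<gamma> \<delta> i)^2) + 2 * eps * yhatq q \<gamma> eps - k"

definition ptq :: "nat \<Rightarrow> (nat \<Rightarrow> real) \<Rightarrow> (nat \<Rightarrow> real) \<Rightarrow> real \<Rightarrow> real \<Rightarrow> nat \<Rightarrow> real" where
  "ptq q \<gamma> \<delta> eps s i =
     (if i = 0 then (if eps = 0 then 0 else yhatq q \<gamma> eps)
      else if i = q then s
      else if 1 \<le> i \<and> i < q then zhatq q \<gamma> \<delta> i else 0)"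

text \<open>Classification (m0 = 0 iff eps = 0).\<close>
definition nonLagrangian :: "nat \<Rightarrow> (nat \<Rightarrow> real) \<Rightarrow> (nat \<Rightarrow> real) \<Rightarrow> real \<Rightarrow> real \<Rightarrow> bool" where
  "nonLagrangian q \<gamma> \<delta> eps k \<longleftrightarrow> eps = 0 \<and> k = 0 \<and> (\<exists>i\<in>{1..q}. \<delta> i \<noteq> 0) \<and> \<gamma> q > 0"

definition multLagrangian :: "nat \<Rightarrow> (nat \<Rightarrow> real) \<Rightarrow> (nat \<Rightarrow> real) \<Rightarrow> real \<Rightarrow> real \<Rightarrow> bool" where
  "multLagrangian q \<gamma> \<delta> eps k \<longleftrightarrow> eps = 0 \<and> k = 0 \<and> (\<forall>i\<in>{1..q}. \<delta> i = 0)"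

definition singLagrangian :: "nat \<Rightarrow> (nat \<Rightarrow> real) \<Rightarrow> (nat \<Rightarrow> real) \<Rightarrow> real \<Rightarrow> real \<Rightarrow> bool" where
  "singLagrangian q \<gamma> \<delta> eps k \<longleftrightarrow>
     \<not> nonLagrangian q \<gamma> \<delta> eps k \<and> \<not> multLagrangian q \<gamma> \<delta> eps k"

end

theory Submission
  imports Defs "HOL-Real_Asymp.Real_Asymp"
begin

text \<open>
  For an admissible multiplier \<open>\<lambda>\<close> (one with \<open>I - \<lambda>\<Delta>\<close> positive semidefinite) and any
  \<open>u \<in> W(\<lambda>)\<close>, completing the square gives \<open>L(w) - \<lambda>Q(w) = L(u) - \<lambda>Q(u) + R(w)\<close>, where
  \<open>R(w)\<close> is the squared distance from \<open>w\<close> to \<open>u\<close> in the seminorm of \<open>I - \<lambda>\<Delta>\<close>. On \<open>W\<close> the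
  constraint terms vanish, so \<open>u\<close> is a minimiser and the minimisers are exactly \<open>W(\<lambda>)\<close>. In the interior of \<open>\<Lambda>\<close>, \<open>W(\<lambda>)\<close> is \<open>{w(\<lambda>)}\<close> or empty
  according as \<open>f(\<lambda>) = 0\<close> or not, so a sign change of the continuous function \<open>f\<close> yields a
  root. At an endpoint \<open>1/\<gamma>\<^sub>j\<close> of \<open>\<Lambda>\<close>, \<open>W(1/\<gamma>\<^sub>j)\<close> is nonempty iff \<open>\<delta>\<^sub>j = 0\<close> and
  \<open>\<gamma>\<^sub>j f\<^sub>j \<le> 0\<close>; otherwise \<open>\<gamma>\<^sub>j f\<close> is positive near the endpoint (it even blows up when
  \<open>\<delta>\<^sub>j \<noteq> 0\<close>). So if \<open>f\<close> has no interior root, an endpoint works. When \<open>\<gamma>\<^sub>q > 0\<close> the left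
  end of \<open>\<Lambda>\<close> is \<open>-\<infinity>\<close>, where \<open>f\<close> tends to \<open>-k\<close> or \<open>-\<infinity>\<close>; this forces \<open>f < 0\<close> somewhere
  unless the problem is non- or multiply-Lagrangian.
\<close>

lemma quadratic_solutions:
  fixes a b :: real
  assumes "a \<noteq> 0"
  shows "{s. a * s\<^sup>2 + b = 0} = (if a * b \<le> 0 then {sqrt (- b / a), - sqrt (- b / a)} else {})"
proof -
  have eq: "a * s\<^sup>2 + b = 0 \<longleftrightarrow> s\<^sup>2 = - b / a" for s
    using assms by (auto simp: field_simps)
  have sign: "- b / a \<ge> 0 \<longleftrightarrow> a * b \<le> 0"
    using assms by (auto simp: divide_le_0_iff mult_le_0_iff)
  show ?thesis
  proof (cases "a * b \<le> 0")
    case True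
    then have "s\<^sup>2 = - b / a \<longleftrightarrow> s = sqrt (- b / a) \<or> s = - sqrt (- b / a)" for s
      using sign power2_eq_iff[of s "sqrt (- b / a)"] by simp
    then show ?thesis using True eq by auto
  next
    case False
    then have "s\<^sup>2 \<noteq> - b / a" for s
      using sign zero_le_power2[of s] by linarith
    then show ?thesis using False eq by auto
  qed
qed

lemma tendsto_inverse_square_at_bot:
  fixes c :: real
  assumes "c \<noteq> 0"
  shows "((\<lambda>l. inverse ((1 - l * c)\<^sup>2)) \<longlongrightarrow> 0) at_bot"
proof -
  from assms consider "c > 0" | "c < 0" by linarith
  then show ?thesis by cases real_asymp+
qed

lemma filterlim_affine_at_bot: "(c::real) > 0 \<Longrightarrow> filterlim (\<lambda>l. c * l - k) at_bot at_bot"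
  by real_asymp

lemma filterlim_inverse_square_at_top:
  fixes c :: real
  assumes "c \<noteq> 0"
  shows "filterlim (\<lambda>l. inverse ((1 - l * c)\<^sup>2)) at_top (at (inverse c))"
proof (rule filterlim_inverse_at_top)
  have "((\<lambda>l. (1 - l * c)\<^sup>2) \<longlongrightarrow> (1 - inverse c * c)\<^sup>2) (at (inverse c))"
    by (intro tendsto_intros)
  then show "((\<lambda>l. (1 - l * c)\<^sup>2) \<longlongrightarrow> 0) (at (inverse c))"
    using assms by simp
  show "eventually (\<lambda>l. 0 < (1 - l * c)\<^sup>2) (at (inverse c))"
    unfolding eventually_at_filter using assms
    by (intro always_eventually) (auto simp: field_simps)
qed

lemma eventually_at_islimpt_ex:
  "eventually P (at a) \<Longrightarrow> a islimpt S \<Longrightarrow> \<exists>x\<in>S. P x"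
  unfolding islimpt_iff_eventually by (meson eventually_mono)

lemma sum_Jset: "(\<Sum>i\<in>Jset q eps. F i) = (if eps = 0 then 0 else F 0) + (\<Sum>i=1..q. F i)"
proof (cases "eps = 0")
  case False
  have "{0..q} = insert 0 {1..q}" by auto
  then show ?thesis using False by (simp add: Jset_def)
qed (simp add: Jset_def)

lemma Vsp_iff: "w \<in> Vsp q eps \<longleftrightarrow> (\<forall>i. q < i \<longrightarrow> w i = 0) \<and> (eps = 0 \<longrightarrow> w 0 = 0)"
  unfolding Vsp_def Jset_def by (auto simp: not_less_eq_eq)

lemma Vsp_eqI:
  assumes "w \<in> Vsp q eps" "v \<in> Vsp q eps" "w 0 = v 0" "\<forall>i\<in>{1..q}. w i = v i"
  shows "w = v"
proof
  fix i show "w i = v i"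
    using assms by (cases "i = 0"; cases "i \<le> q") (auto simp: Vsp_iff)
qed

lemma Qf_eq: "Qf q \<gamma> eps k w = (\<Sum>i=1..q. \<gamma> i * (w i)\<^sup>2) + 2 * eps * w 0 - k"
proof -
  have "(\<Sum>i=1..q. Dlt q \<gamma> i * (w i)\<^sup>2) = (\<Sum>i=1..q. \<gamma> i * (w i)\<^sup>2)"
    by (rule sum.cong) (auto simp: Dlt_def)
  moreover have "(\<Sum>i=1..q. dv eps i * w i) = 0"
    by (rule sum.neutral) (auto simp: dv_def)
  ultimately show ?thesis unfolding Qf_def sum_Jset by (simp add: Dlt_def dv_def)
qed

lemma Lf_eq: "w \<in> Vsp q eps \<Longrightarrow> Lf q \<delta> eps w = (w 0)\<^sup>2 + (\<Sum>i=1..q. (w i - \<delta> i)\<^sup>2)"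
proof -
  assume "w \<in> Vsp q eps"
  moreover have "(\<Sum>i=1..q. (w i - w0v q \<delta> i)\<^sup>2) = (\<Sum>i=1..q. (w i - \<delta> i)\<^sup>2)"
    by (rule sum.cong) (auto simp: w0v_def)
  ultimately show ?thesis unfolding Lf_def sum_Jset by (auto simp: w0v_def Vsp_iff)
qed

lemma Lf_eq_0_iff: "w \<in> Vsp q eps \<Longrightarrow> Lf q \<delta> eps w = 0 \<longleftrightarrow> w = w0v q \<delta>"
proof -
  assume w: "w \<in> Vsp q eps"
  have "Lf q \<delta> eps w = 0 \<longleftrightarrow> (\<forall>i\<in>Jset q eps. w i = w0v q \<delta> i)"
    unfolding Lf_def by (subst sum_nonneg_eq_0_iff) (auto simp: Jset_def)
  also have "\<dots> \<longleftrightarrow> w = w0v q \<delta>"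
  proof
    assume "\<forall>i\<in>Jset q eps. w i = w0v q \<delta> i"
    moreover have "w i = 0" "w0v q \<delta> i = 0" if "i \<notin> Jset q eps" for i
      using w that by (auto simp: Vsp_def w0v_def Jset_def split: if_splits)
    ultimately show "w = w0v q \<delta>" by (metis ext)
  qed simp
  finally show ?thesis .
qed

lemma Wlam_iff: "w \<in> Wlam q \<gamma> \<delta> eps k lam \<longleftrightarrow> w \<in> Vsp q eps \<and> Qf q \<gamma> eps k w = 0 \<and>
   w 0 = lam * eps \<and> (\<forall>i\<in>{1..q}. (1 - lam * \<gamma> i) * w i = \<delta> i)"
  unfolding Wlam_def Wset_def Jset_def Vsp_iff
  by (auto simp: Dlt_def w0v_def dv_def Vsp_iff not_less_eq_eq)

lemma finf_less_0_iff:
  "finf q \<gamma> \<delta> eps k < 0 \<longleftrightarrow> (\<exists>l\<in>interior (LamSet q \<gamma>). ff q \<gamma> \<delta> eps k l < 0)"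
  unfolding finf_def INF_less_iff by (simp add: zero_ereal_def)

lemma fsup_greater_0_iff:
  "fsup q \<gamma> \<delta> eps k > 0 \<longleftrightarrow> (\<exists>l\<in>interior (LamSet q \<gamma>). ff q \<gamma> \<delta> eps k l > 0)"
  unfolding fsup_def less_SUP_iff by (simp add: zero_ereal_def)

subsection \<open>The Lagrangian bound\<close>

lemma Lagrangian_identity:
  assumes w: "w \<in> Vsp q eps" and u: "u \<in> Vsp q eps" and u0: "u 0 = lam * eps"
    and ui: "\<forall>i\<in>{1..q}. (1 - lam * \<gamma> i) * u i = \<delta> i"
  shows "Lf q \<delta> eps w - lam * Qf q \<gamma> eps k w = Lf q \<delta> eps u - lam * Qf q \<gamma> eps k u
     + (w 0 - u 0)\<^sup>2 + (\<Sum>i=1..q. (1 - lam * \<gamma> i) * (w i - u i)\<^sup>2)"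
proof -
  have coord: "(w i - \<delta> i)\<^sup>2 - lam * (\<gamma> i * (w i)\<^sup>2) =
      ((u i - \<delta> i)\<^sup>2 - lam * (\<gamma> i * (u i)\<^sup>2)) + (1 - lam * \<gamma> i) * (w i - u i)\<^sup>2"
    if "i \<in> {1..q}" for i
  proof -
    have "\<delta> i = (1 - lam * \<gamma> i) * u i" using ui that by auto
    then show ?thesis unfolding power2_eq_square by algebra
  qed
  have expand: "Lf q \<delta> eps v - lam * Qf q \<gamma> eps k v = (v 0)\<^sup>2 - 2 * lam * eps * v 0 + lam * k +
      (\<Sum>i=1..q. (v i - \<delta> i)\<^sup>2 - lam * (\<gamma> i * (v i)\<^sup>2))" if "v \<in> Vsp q eps" for v
    using that by (simp add: Lf_eq Qf_eq sum_subtractf sum_distrib_left algebra_simps)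
  have "(\<Sum>i=1..q. (w i - \<delta> i)\<^sup>2 - lam * (\<gamma> i * (w i)\<^sup>2)) =
     (\<Sum>i=1..q. (u i - \<delta> i)\<^sup>2 - lam * (\<gamma> i * (u i)\<^sup>2)) +
     (\<Sum>i=1..q. (1 - lam * \<gamma> i) * (w i - u i)\<^sup>2)"
    by (simp add: coord sum.distrib[symmetric])
  then show ?thesis
    unfolding expand[OF w] expand[OF u] using u0 by (simp add: power2_eq_square algebra_simps)
qed

lemma Wlam_minimisers:
  assumes nonneg: "\<forall>i\<in>{1..q}. 1 - lam * \<gamma> i \<ge> 0" and u: "u \<in> Wlam q \<gamma> \<delta> eps k lam"
  shows "Linf q \<gamma> \<delta> eps k = Lf q \<delta> eps u" and "What q \<gamma> \<delta> eps k = Wlam q \<gamma> \<delta> eps k lam"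
proof -
  from u have uV: "u \<in> Vsp q eps" and uQ: "Qf q \<gamma> eps k u = 0" and u0: "u 0 = lam * eps"
    and ui: "\<forall>i\<in>{1..q}. (1 - lam * \<gamma> i) * u i = \<delta> i" by (auto simp: Wlam_iff)
  define R where "R w = (w 0 - u 0)\<^sup>2 + (\<Sum>i=1..q. (1 - lam * \<gamma> i) * (w i - u i)\<^sup>2)" for w
  have L: "Lf q \<delta> eps w = Lf q \<delta> eps u + R w" if "w \<in> Wset q \<gamma> eps k" for w
    using that Lagrangian_identity[OF _ uV u0 ui, of w k] uQ by (simp add: Wset_def R_def)
  have R_nonneg: "R w \<ge> 0" for w
    unfolding R_def using nonneg by (intro add_nonneg_nonneg sum_nonneg) auto
  have R_eq_0: "R w = 0 \<longleftrightarrow> w \<in> Wlam q \<gamma> \<delta> eps k lam" if "w \<in> Wset q \<gamma> eps k" for w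
  proof -
    have terms_nonneg: "\<forall>i\<in>{1..q}. (1 - lam * \<gamma> i) * (w i - u i)\<^sup>2 \<ge> 0"
      using nonneg by simp
    then have "(\<Sum>i=1..q. (1 - lam * \<gamma> i) * (w i - u i)\<^sup>2) \<ge> 0" by (intro sum_nonneg) auto
    moreover have "(\<Sum>i=1..q. (1 - lam * \<gamma> i) * (w i - u i)\<^sup>2) = 0 \<longleftrightarrow>
        (\<forall>i\<in>{1..q}. (1 - lam * \<gamma> i) * (w i - u i)\<^sup>2 = 0)"
      using terms_nonneg by (intro sum_nonneg_eq_0_iff) auto
    ultimately have "R w = 0 \<longleftrightarrow> w 0 = u 0 \<and> (\<forall>i\<in>{1..q}. (1 - lam * \<gamma> i) * (w i - u i)\<^sup>2 = 0)"
      unfolding R_def by (simp add: add_nonneg_eq_0_iff)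
    also have "\<dots> \<longleftrightarrow> w 0 = u 0 \<and> (\<forall>i\<in>{1..q}. (1 - lam * \<gamma> i) * (w i - u i) = 0)"
      by (simp add: power2_eq_square)
    also have "\<dots> \<longleftrightarrow> w 0 = u 0 \<and> (\<forall>i\<in>{1..q}. (1 - lam * \<gamma> i) * w i = \<delta> i)"
      using ui by (simp add: right_diff_distrib)
    finally show ?thesis using that u0 by (auto simp: Wlam_iff Wset_def)
  qed
  have uW: "u \<in> Wset q \<gamma> eps k" using uV uQ by (simp add: Wset_def)
  show Linf: "Linf q \<gamma> \<delta> eps k = Lf q \<delta> eps u"
    unfolding Linf_def
  proof (rule cInf_eq_minimum)
    show "Lf q \<delta> eps u \<in> Lf q \<delta> eps ` Wset q \<gamma> eps k" using uW by (rule imageI)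
  next
    fix x assume "x \<in> Lf q \<delta> eps ` Wset q \<gamma> eps k"
    then show "Lf q \<delta> eps u \<le> x" using L R_nonneg by force
  qed
  have "w \<in> What q \<gamma> \<delta> eps k \<longleftrightarrow> w \<in> Wlam q \<gamma> \<delta> eps k lam" for w
  proof -
    have "w \<in> What q \<gamma> \<delta> eps k \<longleftrightarrow> w \<in> Wset q \<gamma> eps k \<and> R w = 0"
      unfolding What_def Linf using L by auto
    also have "\<dots> \<longleftrightarrow> w \<in> Wlam q \<gamma> \<delta> eps k lam"
      using R_eq_0 by (auto simp: Wlam_def)
    finally show ?thesis .
  qed
  then show "What q \<gamma> \<delta> eps k = Wlam q \<gamma> \<delta> eps k lam" by blast
qed

subsection \<open>The interior solution \<open>w(\<lambda>)\<close>\<close>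

lemma wlam_in_Vsp: "wlam q \<gamma> \<delta> eps lam \<in> Vsp q eps"
  by (auto simp: Vsp_iff wlam_def Jset_def)

lemma wlam_0: "wlam q \<gamma> \<delta> eps lam 0 = lam * eps"
  by (auto simp: wlam_def Jset_def Dlt_def w0v_def dv_def)

lemma wlam_coord: "i \<in> {1..q} \<Longrightarrow> wlam q \<gamma> \<delta> eps lam i = inverse (1 - lam * \<gamma> i) * \<delta> i"
  by (auto simp: wlam_def Jset_def Dlt_def w0v_def dv_def)

context
  fixes q :: nat and \<gamma> \<delta> :: "nat \<Rightarrow> real" and eps k lam :: real
  assumes invertible: "\<forall>i\<in>{1..q}. 1 - lam * \<gamma> i \<noteq> 0"
begin

lemma Qf_wlam: "Qf q \<gamma> eps k (wlam q \<gamma> \<delta> eps lam) = ff q \<gamma> \<delta> eps k lam"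
proof -
  have "(\<Sum>i=1..q. \<gamma> i * (wlam q \<gamma> \<delta> eps lam i)\<^sup>2) =
        (\<Sum>i=1..q. inverse ((1 - lam * \<gamma> i)\<^sup>2) * \<gamma> i * (\<delta> i)\<^sup>2)"
    by (rule sum.cong) (auto simp: wlam_coord power_mult_distrib power_inverse)
  then show ?thesis by (simp add: Qf_eq wlam_0 ff_def power2_eq_square)
qed

lemma Wlam_eq_wlam:
  "Wlam q \<gamma> \<delta> eps k lam = (if ff q \<gamma> \<delta> eps k lam = 0 then {wlam q \<gamma> \<delta> eps lam} else {})"
proof -
  have coord: "(1 - lam * \<gamma> i) * w i = \<delta> i \<longleftrightarrow> w i = wlam q \<gamma> \<delta> eps lam i"
    if "i \<in> {1..q}" for w i
    using invertible that by (auto simp: wlam_coord field_simps)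
  have "w \<in> Wlam q \<gamma> \<delta> eps k lam \<longleftrightarrow> w = wlam q \<gamma> \<delta> eps lam \<and> ff q \<gamma> \<delta> eps k lam = 0" for w
    unfolding Wlam_iff using coord wlam_in_Vsp wlam_0 Qf_wlam
    by (metis Vsp_eqI)
  then show ?thesis by auto
qed

lemma Lf_wlam: "Lf q \<delta> eps (wlam q \<gamma> \<delta> eps lam) = lam\<^sup>2 * ((lc \<gamma> \<delta> eps 0)\<^sup>2 +
    (\<Sum>i=1..q. inverse ((1 - lam * \<gamma> i)\<^sup>2) * (lc \<gamma> \<delta> eps i)\<^sup>2))"
proof -
  have "(\<Sum>i=1..q. (wlam q \<gamma> \<delta> eps lam i - \<delta> i)\<^sup>2) =
        (\<Sum>i=1..q. lam\<^sup>2 * (inverse ((1 - lam * \<gamma> i)\<^sup>2) * (lc \<gamma> \<delta> eps i)\<^sup>2))"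
  proof (rule sum.cong)
    fix i assume i: "i \<in> {1..q}"
    then have "1 - lam * \<gamma> i \<noteq> 0" "i \<noteq> 0" using invertible by auto
    then show "(wlam q \<gamma> \<delta> eps lam i - \<delta> i)\<^sup>2 =
        lam\<^sup>2 * (inverse ((1 - lam * \<gamma> i)\<^sup>2) * (lc \<gamma> \<delta> eps i)\<^sup>2)"
      by (simp add: wlam_coord[OF i] lc_def power_mult_distrib field_simps power2_eq_square)
  qed simp
  then show ?thesis
    using wlam_in_Vsp by (simp add: Lf_eq wlam_0 lc_def sum_distrib_left power_mult_distrib algebra_simps)
qed

end

lemma isCont_ff:
  assumes "\<forall>i\<in>{1..q}. \<delta> i = 0 \<or> 1 - x * \<gamma> i \<noteq> 0"
  shows "isCont (ff q \<gamma> \<delta> eps k) x"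
proof -
  have "isCont (\<lambda>l. inverse ((1 - l * \<gamma> i)\<^sup>2) * \<gamma> i * (\<delta> i)\<^sup>2) x" if "i \<in> {1..q}" for i
    using assms that by (cases "\<delta> i = 0") (auto intro!: continuous_intros)
  then have "isCont (\<lambda>l. \<Sum>i=1..q. inverse ((1 - l * \<gamma> i)\<^sup>2) * \<gamma> i * (\<delta> i)\<^sup>2) x"
    by (simp add: isCont_sum)
  from isCont_add[OF this, of "\<lambda>l. 2 * eps\<^sup>2 * l - k"] show ?thesis
    unfolding ff_def[abs_def] by (simp add: add_diff_eq)
qed

lemma eventually_ff_negative_at_bot:
  assumes "\<forall>i\<in>{1..q}. \<gamma> i \<noteq> 0" "eps \<noteq> 0 \<or> k > 0"
  shows "eventually (\<lambda>l. ff q \<gamma> \<delta> eps k l < 0) at_bot"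
proof -
  define S where "S l = (\<Sum>i=1..q. inverse ((1 - l * \<gamma> i)\<^sup>2) * \<gamma> i * (\<delta> i)\<^sup>2)" for l
  have "((\<lambda>l. inverse ((1 - l * \<gamma> i)\<^sup>2) * \<gamma> i * (\<delta> i)\<^sup>2) \<longlongrightarrow> 0) at_bot" if "i \<in> {1..q}" for i
    using tendsto_inverse_square_at_bot[of "\<gamma> i"] assms(1) that
    by (intro tendsto_mult_left_zero) auto
  then have S: "(S \<longlongrightarrow> 0) at_bot"
    unfolding S_def by (rule tendsto_null_sum)
  have ff_S: "ff q \<gamma> \<delta> eps k = (\<lambda>l. S l + (2 * eps\<^sup>2 * l - k))"
    by (simp add: fun_eq_iff ff_def S_def)
  show ?thesis
  proof (cases "eps = 0")
    case True
    have "((\<lambda>l. S l - k) \<longlongrightarrow> 0 - k) at_bot"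
      using S by (rule tendsto_diff) simp
    then have "(ff q \<gamma> \<delta> eps k \<longlongrightarrow> - k) at_bot"
      unfolding ff_S using True by simp
    then show ?thesis using True assms(2) by (simp add: order_tendstoD(2))
  next
    case False
    have "filterlim (ff q \<gamma> \<delta> eps k) at_bot at_bot"
      unfolding ff_S using False S by (simp add: filterlim_tendsto_add_at_bot_iff filterlim_affine_at_bot)
    then show ?thesis by (simp add: filterlim_at_bot_dense)
  qed
qed

subsection \<open>Boundary points\<close>

text \<open>The candidate points of \<open>W(1/\<gamma>\<^sub>j)\<close>, with free \<open>j\<close>-th coordinate \<open>s\<close>, and the value
  \<open>f\<^sub>j\<close> of \<open>f\<close> at \<open>1/\<gamma>\<^sub>j\<close>; \<open>pt1\<close>, \<open>f1\<close> and \<open>ptq\<close>, \<open>fq\<close> are the cases \<open>j = 1\<close> and \<open>j = q\<close>.\<close>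

definition boundary_point ::
    "nat \<Rightarrow> (nat \<Rightarrow> real) \<Rightarrow> (nat \<Rightarrow> real) \<Rightarrow> real \<Rightarrow> nat \<Rightarrow> real \<Rightarrow> nat \<Rightarrow> real" where
  "boundary_point q \<gamma> \<delta> eps j s i =
     (if i = 0 then (if eps = 0 then 0 else eps * inverse (\<gamma> j))
      else if i = j then s
      else if 1 \<le> i \<and> i \<le> q then inverse (1 - \<gamma> i / \<gamma> j) * \<delta> i else 0)"

definition boundary_value ::
    "nat \<Rightarrow> (nat \<Rightarrow> real) \<Rightarrow> (nat \<Rightarrow> real) \<Rightarrow> real \<Rightarrow> real \<Rightarrow> nat \<Rightarrow> real" where
  "boundary_value q \<gamma> \<delta> eps k j =
     (\<Sum>i\<in>{1..q}-{j}. \<gamma> i * (inverse (1 - \<gamma> i / \<gamma> j) * \<delta> i)\<^sup>2) + 2 * eps * (eps * inverse (\<gamma> j)) - k"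

lemma pt1_eq_boundary_point: "pt1 q \<gamma> \<delta> eps = boundary_point q \<gamma> \<delta> eps 1"
  by (auto simp: fun_eq_iff pt1_def boundary_point_def yhat1_def zhat1_def)

lemma ptq_eq_boundary_point: "ptq q \<gamma> \<delta> eps = boundary_point q \<gamma> \<delta> eps q"
  by (auto simp: fun_eq_iff ptq_def boundary_point_def yhatq_def zhatq_def)

lemma f1_eq_boundary_value: "f1 q \<gamma> \<delta> eps k = boundary_value q \<gamma> \<delta> eps k 1"
proof -
  have "{1..q} - {1} = {2..q}" by auto
  then show ?thesis by (simp add: f1_def boundary_value_def zhat1_def yhat1_def)
qed

lemma fq_eq_boundary_value: "fq q \<gamma> \<delta> eps k = boundary_value q \<gamma> \<delta> eps k q"
proof -
  have "{1..q} - {q} = {1..q - 1}" by auto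
  then show ?thesis by (simp add: fq_def boundary_value_def zhatq_def yhatq_def)
qed

subsection \<open>Regular canonical forms\<close>

locale canonical_form =
  fixes q :: nat and \<gamma> \<delta> :: "nat \<Rightarrow> real" and k eps :: real
  assumes q_pos: "q \<ge> 1"
    and gamma_decreasing: "\<forall>i j. 1 \<le> i \<longrightarrow> i < j \<longrightarrow> j \<le> q \<longrightarrow> \<gamma> j < \<gamma> i"
    and gamma_nonzero: "\<forall>i\<in>{1..q}. \<gamma> i \<noteq> 0"
    and gamma_1_pos: "\<gamma> 1 > 0"
begin

lemma gamma_le: "1 \<le> i \<Longrightarrow> i \<le> j \<Longrightarrow> j \<le> q \<Longrightarrow> \<gamma> j \<le> \<gamma> i"
  using gamma_decreasing by (cases "i = j") (auto intro: less_imp_le)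

lemma gamma_eq_iff: "i \<in> {1..q} \<Longrightarrow> j \<in> {1..q} \<Longrightarrow> \<gamma> i = \<gamma> j \<longleftrightarrow> i = j"
  using gamma_decreasing[rule_format, of i j] gamma_decreasing[rule_format, of j i]
  by (cases i j rule: linorder_cases) auto

lemma gamma_q_nonzero: "\<gamma> q \<noteq> 0"
  using gamma_nonzero q_pos by auto

lemma interior_LamSet_iff:
  "l \<in> interior (LamSet q \<gamma>) \<longleftrightarrow> l < inverse (\<gamma> 1) \<and> (\<gamma> q < 0 \<longrightarrow> inverse (\<gamma> q) < l)"
proof -
  have "interior (LamSet q \<gamma>) =
      (if \<gamma> q > 0 then {..<inverse (\<gamma> 1)} else {inverse (\<gamma> q)<..<inverse (\<gamma> 1)})"
    unfolding LamSet_def by auto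
  then show ?thesis using gamma_q_nonzero by auto
qed

lemma zero_in_interior_LamSet: "0 \<in> interior (LamSet q \<gamma>)"
  unfolding interior_LamSet_iff using gamma_1_pos by (metis inverse_negative_iff_negative inverse_positive_iff_positive)

lemma convex_LamSet: "convex (LamSet q \<gamma>)"
  by (simp add: LamSet_def)

lemma LamSet_iff:
  "l \<in> LamSet q \<gamma> \<longleftrightarrow> l \<le> inverse (\<gamma> 1) \<and> (\<gamma> q < 0 \<longrightarrow> inverse (\<gamma> q) \<le> l)"
  using gamma_q_nonzero by (auto simp: LamSet_def)

lemma one_minus_lam_gamma_ge:
  assumes "i \<in> {1..q}"
  shows "1 - lam * \<gamma> i \<ge> min (1 - lam * \<gamma> 1) (1 - lam * \<gamma> q)"
proof -
  have "\<gamma> q \<le> \<gamma> i" "\<gamma> i \<le> \<gamma> 1" using assms gamma_le[of i q] gamma_le[of 1 i] by auto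
  then show ?thesis
    by (cases "lam \<ge> 0") (auto simp: min_def intro: mult_left_mono mult_left_mono_neg)
qed

lemma LamSet_admissible:
  assumes "lam \<in> LamSet q \<gamma>" "i \<in> {1..q}"
  shows "1 - lam * \<gamma> i \<ge> 0"
proof -
  have "lam * \<gamma> 1 \<le> 1"
    using assms gamma_1_pos by (simp add: LamSet_iff inverse_eq_divide pos_le_divide_eq)
  moreover have "lam * \<gamma> q \<le> 1"
  proof (cases "\<gamma> q < 0")
    case True
    then show ?thesis using assms by (simp add: LamSet_iff inverse_eq_divide neg_divide_le_eq)
  next
    case False
    then have "0 \<le> \<gamma> q" "\<gamma> q \<le> \<gamma> 1" using gamma_le[of 1 q] q_pos by auto
    with \<open>lam * \<gamma> 1 \<le> 1\<close> show ?thesis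
      by (smt (verit) mult_left_mono mult_nonpos_nonneg)
  qed
  ultimately show ?thesis using one_minus_lam_gamma_ge[OF assms(2), of lam] by linarith
qed

lemma interior_LamSet_pos:
  assumes "lam \<in> interior (LamSet q \<gamma>)" "i \<in> {1..q}"
  shows "1 - lam * \<gamma> i > 0"
proof -
  have "lam * \<gamma> 1 < 1"
    using assms gamma_1_pos by (simp add: interior_LamSet_iff inverse_eq_divide pos_less_divide_eq)
  moreover have "lam * \<gamma> q < 1"
  proof (cases "\<gamma> q < 0")
    case True
    then show ?thesis using assms by (simp add: interior_LamSet_iff inverse_eq_divide neg_divide_less_eq)
  next
    case False
    then have "0 \<le> \<gamma> q" "\<gamma> q \<le> \<gamma> 1" using gamma_le[of 1 q] q_pos by auto
    with \<open>lam * \<gamma> 1 < 1\<close> show ?thesis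
      by (smt (verit) mult_left_mono mult_nonpos_nonneg)
  qed
  ultimately show ?thesis using one_minus_lam_gamma_ge[OF assms(2), of lam] by linarith
qed

lemma interior_LamSet_invertible:
  "lam \<in> interior (LamSet q \<gamma>) \<Longrightarrow> \<forall>i\<in>{1..q}. 1 - lam * \<gamma> i \<noteq> 0"
  using interior_LamSet_pos by (metis less_irrefl)

lemma LamSet_subset_closure_interior: "LamSet q \<gamma> \<subseteq> closure (interior (LamSet q \<gamma>))"
  using convex_closure_interior[OF convex_LamSet] zero_in_interior_LamSet closure_subset by auto

lemma inverse_gamma_1_in_LamSet: "inverse (\<gamma> 1) \<in> LamSet q \<gamma>"
proof -
  have "\<gamma> q < 0 \<Longrightarrow> inverse (\<gamma> q) \<le> inverse (\<gamma> 1)"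
    using gamma_1_pos by (meson inverse_negative_iff_negative inverse_positive_iff_positive
        less_trans order.strict_implies_order)
  then show ?thesis by (simp add: LamSet_iff)
qed

lemma inverse_gamma_q_in_LamSet: "\<gamma> q < 0 \<Longrightarrow> inverse (\<gamma> q) \<in> LamSet q \<gamma>"
  using inverse_gamma_1_in_LamSet by (simp add: LamSet_iff)

lemma Wlam_minimisers_LamSet:
  assumes "lam \<in> LamSet q \<gamma>" "u \<in> Wlam q \<gamma> \<delta> eps k lam"
  shows "Linf q \<gamma> \<delta> eps k = Lf q \<delta> eps u" "What q \<gamma> \<delta> eps k = Wlam q \<gamma> \<delta> eps k lam"
  using Wlam_minimisers[OF _ assms(2)] LamSet_admissible[OF assms(1)] by auto

lemma Wlam_eq_What:
  assumes "lam \<in> LamSet q \<gamma>" "Wlam q \<gamma> \<delta> eps k lam \<noteq> {}"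
  shows "What q \<gamma> \<delta> eps k = Wlam q \<gamma> \<delta> eps k lam"
  using assms Wlam_minimisers_LamSet(2) by blast

lemma Wcirc_eq_What:
  assumes "Wcirc q \<gamma> \<delta> eps k \<noteq> {}"
  shows "Wcirc q \<gamma> \<delta> eps k = What q \<gamma> \<delta> eps k"
proof -
  have Wlam: "Wlam q \<gamma> \<delta> eps k l = What q \<gamma> \<delta> eps k"
    if "l \<in> interior (LamSet q \<gamma>)" "Wlam q \<gamma> \<delta> eps k l \<noteq> {}" for l
    using Wlam_eq_What[OF subsetD[OF interior_subset that(1)] that(2)] by simp
  obtain l where "l \<in> interior (LamSet q \<gamma>)" "Wlam q \<gamma> \<delta> eps k l \<noteq> {}"
    using assms by (auto simp: Wcirc_def)
  then have "What q \<gamma> \<delta> eps k \<subseteq> Wcirc q \<gamma> \<delta> eps k"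
    using Wlam by (auto simp: Wcirc_def)
  moreover have "Wcirc q \<gamma> \<delta> eps k \<subseteq> What q \<gamma> \<delta> eps k"
    using Wlam by (auto simp: Wcirc_def)
  ultimately show ?thesis by blast
qed

lemma Wlam_two_multipliers_multLagrangian:
  assumes "l1 \<noteq> l2" "w \<in> Wlam q \<gamma> \<delta> eps k l1" "w \<in> Wlam q \<gamma> \<delta> eps k l2"
  shows "multLagrangian q \<gamma> \<delta> eps k"
proof -
  have eps: "eps = 0" using assms by (auto simp: Wlam_iff)
  have coord: "w i = 0 \<and> \<delta> i = 0" if i: "i \<in> {1..q}" for i
  proof -
    have eq: "(1 - l1 * \<gamma> i) * w i = \<delta> i" "(1 - l2 * \<gamma> i) * w i = \<delta> i"
      using assms i by (auto simp: Wlam_iff)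
    have "(l2 - l1) * (\<gamma> i * w i) = (1 - l1 * \<gamma> i) * w i - (1 - l2 * \<gamma> i) * w i"
      by (simp add: algebra_simps)
    also have "\<dots> = 0" using eq by simp
    finally show ?thesis using assms(1) gamma_nonzero i eq(1) by auto
  qed
  have "Qf q \<gamma> eps k w = 0" using assms by (auto simp: Wlam_iff)
  then have "k = 0" using eps coord by (simp add: Qf_eq)
  then show ?thesis using eps coord by (auto simp: multLagrangian_def)
qed

lemma ff_root_if_sign_change:
  assumes "l1 \<in> interior (LamSet q \<gamma>)" "ff q \<gamma> \<delta> eps k l1 < 0"
    and "l2 \<in> interior (LamSet q \<gamma>)" "ff q \<gamma> \<delta> eps k l2 > 0"
  shows "\<exists>l\<in>interior (LamSet q \<gamma>). ff q \<gamma> \<delta> eps k l = 0"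
proof -
  have "isCont (ff q \<gamma> \<delta> eps k) l" if "l \<in> interior (LamSet q \<gamma>)" for l
    using interior_LamSet_invertible[OF that] by (intro isCont_ff) simp
  then have "continuous_on (interior (LamSet q \<gamma>)) (ff q \<gamma> \<delta> eps k)"
    by (intro continuous_at_imp_continuous_on) blast
  moreover have "connected (interior (LamSet q \<gamma>))"
    by (intro convex_connected convex_interior convex_LamSet)
  ultimately have "connected (ff q \<gamma> \<delta> eps k ` interior (LamSet q \<gamma>))"
    by (rule connected_continuous_image)
  from connectedD_interval[OF this imageI[OF assms(1)] imageI[OF assms(3)]]
  have "0 \<in> ff q \<gamma> \<delta> eps k ` interior (LamSet q \<gamma>)"
    using assms(2,4) by simp
  then obtain l where "l \<in> interior (LamSet q \<gamma>)" "0 = ff q \<gamma> \<delta> eps k l" by (rule imageE)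
  then show ?thesis by auto
qed

lemma What_eq_Wcirc_if_sign_change:
  assumes "\<exists>l\<in>interior (LamSet q \<gamma>). ff q \<gamma> \<delta> eps k l < 0"
    and "\<exists>l\<in>interior (LamSet q \<gamma>). ff q \<gamma> \<delta> eps k l > 0"
  shows "What q \<gamma> \<delta> eps k = Wcirc q \<gamma> \<delta> eps k \<and> Wcirc q \<gamma> \<delta> eps k \<noteq> {}"
proof -
  obtain l where l: "l \<in> interior (LamSet q \<gamma>)" "ff q \<gamma> \<delta> eps k l = 0"
    using assms ff_root_if_sign_change by blast
  then have "Wlam q \<gamma> \<delta> eps k l \<noteq> {}"
    using Wlam_eq_wlam[OF interior_LamSet_invertible] by simp
  then have "Wcirc q \<gamma> \<delta> eps k \<noteq> {}" using l(1) by (auto simp: Wcirc_def)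
  then show ?thesis using Wcirc_eq_What by simp
qed

lemma ff_negative_at_bot:
  assumes gamma_q: "\<gamma> q > 0" and "eps \<noteq> 0 \<or> k > 0"
  shows "\<exists>l\<in>interior (LamSet q \<gamma>). ff q \<gamma> \<delta> eps k l < 0"
proof -
  have "eventually (\<lambda>l. l < 0 \<and> ff q \<gamma> \<delta> eps k l < 0) at_bot"
    using eventually_ff_negative_at_bot[OF gamma_nonzero assms(2)] by (intro eventually_conj) simp_all
  then obtain l where l: "l < 0" "ff q \<gamma> \<delta> eps k l < 0"
    using eventually_happens'[OF trivial_limit_at_bot_linorder] by blast
  have "0 < inverse (\<gamma> 1)" using gamma_1_pos by simp
  then have "l \<in> interior (LamSet q \<gamma>)"
    unfolding interior_LamSet_iff using l(1) gamma_q by (intro conjI impI) linarith+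
  with l(2) show ?thesis by blast
qed

lemma k_pos_if_eps_0:
  assumes "\<gamma> q > 0" "eps = 0" "Wset q \<gamma> eps k \<noteq> {}"
    and "\<not> nonLagrangian q \<gamma> \<delta> eps k" "\<not> multLagrangian q \<gamma> \<delta> eps k"
  shows "k > 0"
proof -
  obtain w where "w \<in> Wset q \<gamma> eps k" using assms(3) by auto
  then have "k = (\<Sum>i=1..q. \<gamma> i * (w i)\<^sup>2)" using assms(2) by (simp add: Wset_def Qf_eq)
  moreover have "\<gamma> i * (w i)\<^sup>2 \<ge> 0" if "i \<in> {1..q}" for i
    using gamma_le[of i q] that assms(1) by auto
  then have "(\<Sum>i=1..q. \<gamma> i * (w i)\<^sup>2) \<ge> 0" by (rule sum_nonneg)
  ultimately have "k \<ge> 0" by simp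
  moreover have "k \<noteq> 0"
    using assms by (auto simp: nonLagrangian_def multLagrangian_def)
  ultimately show ?thesis by simp
qed

end

subsection \<open>The endpoints of the admissible region\<close>

text \<open>Only \<open>j = 1\<close> and, when \<open>\<gamma>\<^sub>q < 0\<close>, \<open>j = q\<close> satisfy \<open>j_endpoint\<close>.\<close>

locale canonical_form_endpoint = canonical_form +
  fixes j :: nat
  assumes j_range: "j \<in> {1..q}"
    and j_endpoint: "inverse (\<gamma> j) \<in> LamSet q \<gamma>"
begin

abbreviation "Wj \<equiv> Wlam q \<gamma> \<delta> eps k (inverse (\<gamma> j))"
abbreviation "ptj \<equiv> boundary_point q \<gamma> \<delta> eps j"
abbreviation "fj \<equiv> boundary_value q \<gamma> \<delta> eps k j"

lemma gamma_j_nonzero: "\<gamma> j \<noteq> 0"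
  using gamma_nonzero j_range by blast

lemma one_minus_gamma_ratio_pos:
  assumes "i \<in> {1..q}" "i \<noteq> j"
  shows "1 - \<gamma> i / \<gamma> j > 0"
proof -
  have "1 - \<gamma> i / \<gamma> j \<ge> 0"
    using LamSet_admissible[OF j_endpoint assms(1)] by (simp add: divide_inverse mult.commute)
  moreover have "\<gamma> i \<noteq> \<gamma> j" using gamma_eq_iff assms j_range by blast
  then have "\<gamma> i / \<gamma> j \<noteq> 1" by simp
  ultimately show ?thesis by linarith
qed

lemma sum_split_j: "(\<Sum>i=1..q. F i) = F j + (\<Sum>i\<in>{1..q}-{j}. F i)"
  using sum.remove[OF _ j_range] by simp

lemma boundary_point_in_Vsp: "ptj s \<in> Vsp q eps"
  using j_range by (auto simp: Vsp_iff boundary_point_def)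

lemma Qf_boundary_point: "Qf q \<gamma> eps k (ptj s) = \<gamma> j * s\<^sup>2 + fj"
proof -
  have "(\<Sum>i\<in>{1..q}-{j}. \<gamma> i * (ptj s i)\<^sup>2) =
      (\<Sum>i\<in>{1..q}-{j}. \<gamma> i * (inverse (1 - \<gamma> i / \<gamma> j) * \<delta> i)\<^sup>2)"
    by (rule sum.cong) (auto simp: boundary_point_def)
  then show ?thesis
    unfolding Qf_eq sum_split_j[of "\<lambda>i. \<gamma> i * (ptj s i)\<^sup>2"] using j_range
    by (simp add: boundary_value_def boundary_point_def)
qed

lemma boundary_point_in_Wj_iff: "ptj s \<in> Wj \<longleftrightarrow> \<delta> j = 0 \<and> \<gamma> j * s\<^sup>2 + fj = 0"
proof -
  have coord: "(1 - inverse (\<gamma> j) * \<gamma> i) * ptj s i = \<delta> i" if "i \<in> {1..q}" "i \<noteq> j" for i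
    using one_minus_gamma_ratio_pos[OF that] that
    by (simp add: boundary_point_def divide_inverse mult.commute)
  have coord_j: "(1 - inverse (\<gamma> j) * \<gamma> j) * ptj s j = 0"
    using gamma_j_nonzero by simp
  have "(\<forall>i\<in>{1..q}. (1 - inverse (\<gamma> j) * \<gamma> i) * ptj s i = \<delta> i) \<longleftrightarrow> \<delta> j = 0"
  proof
    assume "\<forall>i\<in>{1..q}. (1 - inverse (\<gamma> j) * \<gamma> i) * ptj s i = \<delta> i"
    then show "\<delta> j = 0" using coord_j j_range by force
  next
    assume "\<delta> j = 0"
    then show "\<forall>i\<in>{1..q}. (1 - inverse (\<gamma> j) * \<gamma> i) * ptj s i = \<delta> i"
      using coord coord_j by (metis (no_types))
  qed
  moreover have "ptj s 0 = inverse (\<gamma> j) * eps"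
    using j_range by (simp add: boundary_point_def)
  ultimately show ?thesis
    unfolding Wlam_iff using boundary_point_in_Vsp Qf_boundary_point by auto
qed

lemma Wj_eq_boundary_point: "w \<in> Wj \<Longrightarrow> w = ptj (w j)"
proof (rule Vsp_eqI)
  assume w: "w \<in> Wj"
  then show "w \<in> Vsp q eps" "w 0 = ptj (w j) 0"
    using j_range by (auto simp: Wlam_iff Vsp_iff boundary_point_def)
  have "w i = ptj (w j) i" if "i \<in> {1..q}" "i \<noteq> j" for i
  proof -
    have "1 - \<gamma> i / \<gamma> j \<noteq> 0" using one_minus_gamma_ratio_pos[OF that] by linarith
    then have "w i = inverse (1 - \<gamma> i / \<gamma> j) * ((1 - \<gamma> i / \<gamma> j) * w i)" by simp
    also have "(1 - \<gamma> i / \<gamma> j) * w i = \<delta> i"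
      using w that by (auto simp: Wlam_iff divide_inverse mult.commute)
    finally show ?thesis using that by (simp add: boundary_point_def)
  qed
  then show "\<forall>i\<in>{1..q}. w i = ptj (w j) i" by (auto simp: boundary_point_def)
qed (rule boundary_point_in_Vsp)

lemma Wj_eq:
  "Wj = (if \<delta> j = 0 \<and> \<gamma> j * fj \<le> 0
         then {ptj (sqrt (- fj / \<gamma> j)), ptj (- sqrt (- fj / \<gamma> j))} else {})"
proof -
  have "Wj = ptj ` {s. \<delta> j = 0 \<and> \<gamma> j * s\<^sup>2 + fj = 0}"
  proof (intro equalityI subsetI)
    fix w assume w: "w \<in> Wj"
    then have "\<delta> j = 0 \<and> \<gamma> j * (w j)\<^sup>2 + fj = 0"
      using Wj_eq_boundary_point boundary_point_in_Wj_iff by metis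
    then show "w \<in> ptj ` {s. \<delta> j = 0 \<and> \<gamma> j * s\<^sup>2 + fj = 0}"
      using Wj_eq_boundary_point[OF w] by blast
  qed (auto simp: boundary_point_in_Wj_iff)
  also have "\<dots> = ptj ` (if \<delta> j = 0 then {s. \<gamma> j * s\<^sup>2 + fj = 0} else {})"
    by auto
  finally show ?thesis using quadratic_solutions[OF gamma_j_nonzero, of fj] by auto
qed

lemma Lf_boundary_point:
  assumes "\<delta> j = 0"
  shows "Lf q \<delta> eps (ptj s) = inverse ((\<gamma> j)\<^sup>2) * ((lc \<gamma> \<delta> eps 0)\<^sup>2 +
      (\<Sum>i\<in>{1..q}-{j}. inverse ((1 - \<gamma> i / \<gamma> j)\<^sup>2) * (lc \<gamma> \<delta> eps i)\<^sup>2)) + s\<^sup>2"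
proof -
  have "(\<Sum>i\<in>{1..q}-{j}. (ptj s i - \<delta> i)\<^sup>2) =
      (\<Sum>i\<in>{1..q}-{j}. inverse ((\<gamma> j)\<^sup>2) * (inverse ((1 - \<gamma> i / \<gamma> j)\<^sup>2) * (lc \<gamma> \<delta> eps i)\<^sup>2))"
  proof (rule sum.cong)
    fix i assume i: "i \<in> {1..q} - {j}"
    then have "1 - \<gamma> i / \<gamma> j \<noteq> 0" "i \<noteq> 0" using one_minus_gamma_ratio_pos[of i] by auto
    then have "\<gamma> j - \<gamma> i \<noteq> 0" using gamma_j_nonzero by auto
    then show "(ptj s i - \<delta> i)\<^sup>2 =
        inverse ((\<gamma> j)\<^sup>2) * (inverse ((1 - \<gamma> i / \<gamma> j)\<^sup>2) * (lc \<gamma> \<delta> eps i)\<^sup>2)"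
      using i gamma_j_nonzero
      by (simp add: boundary_point_def lc_def power_mult_distrib field_simps power2_eq_square)
  qed simp
  moreover have "(ptj s 0)\<^sup>2 = inverse ((\<gamma> j)\<^sup>2) * (lc \<gamma> \<delta> eps 0)\<^sup>2"
    by (simp add: boundary_point_def lc_def power_mult_distrib power_inverse)
  ultimately show ?thesis
    unfolding Lf_eq[OF boundary_point_in_Vsp] sum_split_j[of "\<lambda>i. (ptj s i - \<delta> i)\<^sup>2"]
    using assms j_range by (simp add: boundary_point_def sum_distrib_left algebra_simps)
qed

lemma ff_positive_near_endpoint:
  assumes "\<delta> j \<noteq> 0 \<or> \<gamma> j * fj > 0"
  shows "eventually (\<lambda>l. \<gamma> j * ff q \<gamma> \<delta> eps k l > 0) (at (inverse (\<gamma> j)))"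
proof -
  let ?a = "inverse (\<gamma> j)"
  define g where "g l = (\<Sum>i\<in>{1..q}-{j}. inverse ((1 - l * \<gamma> i)\<^sup>2) * \<gamma> i * (\<delta> i)\<^sup>2) +
      2 * eps\<^sup>2 * l - k" for l
  have ff_g: "\<gamma> j * ff q \<gamma> \<delta> eps k l =
      \<gamma> j * g l + (\<gamma> j * \<delta> j)\<^sup>2 * inverse ((1 - l * \<gamma> j)\<^sup>2)" for l
    unfolding ff_def g_def sum_split_j[of "\<lambda>i. inverse ((1 - l * \<gamma> i)\<^sup>2) * \<gamma> i * (\<delta> i)\<^sup>2"]
    by (simp add: algebra_simps power2_eq_square)
  have ratio: "?a * \<gamma> i = \<gamma> i / \<gamma> j" for i by (simp add: divide_inverse mult.commute)
  have "1 - ?a * \<gamma> i \<noteq> 0" if "i \<in> {1..q} - {j}" for i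
  proof -
    have "1 - \<gamma> i / \<gamma> j > 0" using one_minus_gamma_ratio_pos that by blast
    then show ?thesis unfolding ratio by linarith
  qed
  then have "isCont g ?a"
    unfolding g_def by (intro continuous_intros) auto
  then have g: "((\<lambda>l. \<gamma> j * g l) \<longlongrightarrow> \<gamma> j * g ?a) (at ?a)"
    by (intro tendsto_mult_left) (simp add: isCont_def)
  have "g ?a = fj"
    unfolding g_def boundary_value_def ratio
    by (simp add: power_mult_distrib power_inverse power2_eq_square mult_ac)
  show ?thesis
  proof (cases "\<delta> j = 0")
    case True
    then show ?thesis
      using g assms \<open>g ?a = fj\<close> by (simp add: ff_g order_tendstoD(1))
  next
    case False
    have "filterlim (\<lambda>l. (\<gamma> j * \<delta> j)\<^sup>2 * inverse ((1 - l * \<gamma> j)\<^sup>2)) at_top (at ?a)"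
      using False gamma_j_nonzero filterlim_inverse_square_at_top[OF gamma_j_nonzero]
      by (intro filterlim_tendsto_pos_mult_at_top tendsto_const) auto
    then have "filterlim (\<lambda>l. \<gamma> j * ff q \<gamma> \<delta> eps k l) at_top (at ?a)"
      unfolding ff_g by (rule filterlim_tendsto_add_at_top[OF g])
    then show ?thesis by (simp add: filterlim_at_top_dense)
  qed
qed

lemma What_eq_Wj_if_ff_nonpos:
  assumes "\<forall>l\<in>interior (LamSet q \<gamma>). \<gamma> j * ff q \<gamma> \<delta> eps k l \<le> 0"
  shows "What q \<gamma> \<delta> eps k = Wj \<and> Wj \<noteq> {}"
proof -
  have "inverse (\<gamma> j) \<notin> interior (LamSet q \<gamma>)"
    using interior_LamSet_pos[OF _ j_range] gamma_j_nonzero by force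
  then have "inverse (\<gamma> j) islimpt interior (LamSet q \<gamma>)"
    using LamSet_subset_closure_interior j_endpoint by (auto simp: islimpt_in_closure)
  then have "\<not> (\<delta> j \<noteq> 0 \<or> \<gamma> j * fj > 0)"
    using eventually_at_islimpt_ex[OF ff_positive_near_endpoint] assms by force
  then have "Wj \<noteq> {}" by (subst Wj_eq) simp
  then show ?thesis using Wlam_eq_What[OF j_endpoint] by simp
qed

lemma Wj_solution:
  assumes "What q \<gamma> \<delta> eps k = Wj" "Wj \<noteq> {}"
  shows "let \<zeta> = sqrt (- fj / \<gamma> j) in
    \<zeta> \<ge> 0 \<and>
    Linf q \<gamma> \<delta> eps k = inverse ((\<gamma> j)\<^sup>2) * ((lc \<gamma> \<delta> eps 0)\<^sup>2 +
      (\<Sum>i\<in>{1..q}-{j}. inverse ((1 - \<gamma> i / \<gamma> j)\<^sup>2) * (lc \<gamma> \<delta> eps i)\<^sup>2)) + \<zeta>\<^sup>2 \<and>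
    What q \<gamma> \<delta> eps k = {ptj \<zeta>, ptj (- \<zeta>)}"
proof -
  define \<zeta> where "\<zeta> = sqrt (- fj / \<gamma> j)"
  have cond: "\<delta> j = 0" "\<gamma> j * fj \<le> 0" and Wj: "Wj = {ptj \<zeta>, ptj (- \<zeta>)}"
    using assms(2) Wj_eq unfolding \<zeta>_def by (auto split: if_splits)
  then have "- fj / \<gamma> j \<ge> 0"
    using gamma_j_nonzero by (auto simp: divide_le_0_iff mult_le_0_iff)
  moreover have "Linf q \<gamma> \<delta> eps k = Lf q \<delta> eps (ptj \<zeta>)"
    using Wlam_minimisers_LamSet(1)[OF j_endpoint] Wj by simp
  ultimately show ?thesis
    unfolding Let_def \<zeta>_def[symmetric] using assms(1) Wj Lf_boundary_point[OF cond(1)]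
    by (simp add: \<zeta>_def)
qed

end

context canonical_form
begin

lemma endpoint_1: "canonical_form_endpoint q \<gamma> 1"
  using q_pos inverse_gamma_1_in_LamSet by unfold_locales auto

lemma endpoint_q: "\<gamma> q < 0 \<Longrightarrow> canonical_form_endpoint q \<gamma> q"
  using q_pos inverse_gamma_q_in_LamSet by unfold_locales auto

lemma What_eq_W1_if_ff_nonpos:
  assumes "\<forall>l\<in>interior (LamSet q \<gamma>). ff q \<gamma> \<delta> eps k l \<le> 0"
  shows "What q \<gamma> \<delta> eps k = W1 q \<gamma> \<delta> eps k \<and> W1 q \<gamma> \<delta> eps k \<noteq> {}"
proof -
  interpret e: canonical_form_endpoint q \<gamma> \<delta> k eps 1 by (rule endpoint_1)
  show ?thesis
    using e.What_eq_Wj_if_ff_nonpos assms gamma_1_pos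
    by (simp add: W1_def mult_nonneg_nonpos)
qed

lemma What_eq_Wq_if_ff_nonneg:
  assumes "\<gamma> q < 0" "\<forall>l\<in>interior (LamSet q \<gamma>). ff q \<gamma> \<delta> eps k l \<ge> 0"
  shows "What q \<gamma> \<delta> eps k = Wq q \<gamma> \<delta> eps k \<and> Wq q \<gamma> \<delta> eps k \<noteq> {}"
proof -
  interpret e: canonical_form_endpoint q \<gamma> \<delta> k eps q by (rule endpoint_q[OF assms(1)])
  show ?thesis
    using e.What_eq_Wj_if_ff_nonpos assms
    by (simp add: Wq_def mult_nonpos_nonneg)
qed

lemma W1_solution:
  assumes "What q \<gamma> \<delta> eps k = W1 q \<gamma> \<delta> eps k" "What q \<gamma> \<delta> eps k \<noteq> {}"
  shows "let \<zeta> = sqrt (- f1 q \<gamma> \<delta> eps k / \<gamma> 1) in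
    \<zeta> \<ge> 0 \<and>
    Linf q \<gamma> \<delta> eps k = inverse ((\<gamma> 1)\<^sup>2) * ((lc \<gamma> \<delta> eps 0)\<^sup>2 +
      (\<Sum>i=2..q. inverse ((1 - \<gamma> i / \<gamma> 1)\<^sup>2) * (lc \<gamma> \<delta> eps i)\<^sup>2)) + \<zeta>\<^sup>2 \<and>
    What q \<gamma> \<delta> eps k = {pt1 q \<gamma> \<delta> eps \<zeta>, pt1 q \<gamma> \<delta> eps (- \<zeta>)}"
proof -
  interpret e: canonical_form_endpoint q \<gamma> \<delta> k eps 1 by (rule endpoint_1)
  have "{1..q} - {1} = {2..q}" by auto
  then show ?thesis
    using e.Wj_solution assms
    by (simp add: W1_def pt1_eq_boundary_point f1_eq_boundary_value)
qed

lemma Wq_solution: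
  assumes "\<gamma> q < 0" "What q \<gamma> \<delta> eps k = Wq q \<gamma> \<delta> eps k" "What q \<gamma> \<delta> eps k \<noteq> {}"
  shows "let \<zeta> = sqrt (fq q \<gamma> \<delta> eps k / (- \<gamma> q)) in
    \<zeta> \<ge> 0 \<and>
    Linf q \<gamma> \<delta> eps k = inverse ((\<gamma> q)\<^sup>2) * ((lc \<gamma> \<delta> eps 0)\<^sup>2 +
      (\<Sum>i=1..q-1. inverse ((1 - \<gamma> i / \<gamma> q)\<^sup>2) * (lc \<gamma> \<delta> eps i)\<^sup>2)) + \<zeta>\<^sup>2 \<and>
    What q \<gamma> \<delta> eps k = {ptq q \<gamma> \<delta> eps \<zeta>, ptq q \<gamma> \<delta> eps (- \<zeta>)}"
proof -
  interpret e: canonical_form_endpoint q \<gamma> \<delta> k eps q by (rule endpoint_q[OF assms(1)])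
  have "{1..q} - {q} = {1..q-1}" by auto
  then show ?thesis
    using e.Wj_solution assms(2,3)
    by (simp add: Wq_def ptq_eq_boundary_point fq_eq_boundary_value)
qed

lemma gamma_q_pos_cases:
  assumes "\<gamma> q > 0" "Wset q \<gamma> eps k \<noteq> {}"
    and "\<not> nonLagrangian q \<gamma> \<delta> eps k" "\<not> multLagrangian q \<gamma> \<delta> eps k"
  shows "finf q \<gamma> \<delta> eps k < 0 \<and>
    (fsup q \<gamma> \<delta> eps k > 0 \<longrightarrow> What q \<gamma> \<delta> eps k = Wcirc q \<gamma> \<delta> eps k \<and> Wcirc q \<gamma> \<delta> eps k \<noteq> {}) \<and>
    (fsup q \<gamma> \<delta> eps k \<le> 0 \<longrightarrow> What q \<gamma> \<delta> eps k = W1 q \<gamma> \<delta> eps k \<and> W1 q \<gamma> \<delta> eps k \<noteq> {})"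
proof -
  have "eps \<noteq> 0 \<or> k > 0" using k_pos_if_eps_0 assms by blast
  then have "finf q \<gamma> \<delta> eps k < 0"
    using ff_negative_at_bot assms(1) finf_less_0_iff by blast
  then show ?thesis
    using What_eq_Wcirc_if_sign_change What_eq_W1_if_ff_nonpos
    by (auto simp: finf_less_0_iff fsup_greater_0_iff not_less[symmetric])
qed

lemma gamma_q_neg_cases:
  assumes "\<gamma> q < 0"
  shows "(finf q \<gamma> \<delta> eps k < 0 \<and> 0 < fsup q \<gamma> \<delta> eps k \<longrightarrow>
      What q \<gamma> \<delta> eps k = Wcirc q \<gamma> \<delta> eps k \<and> Wcirc q \<gamma> \<delta> eps k \<noteq> {}) \<and>
    (fsup q \<gamma> \<delta> eps k \<le> 0 \<longrightarrow> What q \<gamma> \<delta> eps k = W1 q \<gamma> \<delta> eps k \<and> W1 q \<gamma> \<delta> eps k \<noteq> {}) \<and>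
    (finf q \<gamma> \<delta> eps k \<ge> 0 \<longrightarrow> What q \<gamma> \<delta> eps k = Wq q \<gamma> \<delta> eps k \<and> Wq q \<gamma> \<delta> eps k \<noteq> {})"
  using What_eq_Wcirc_if_sign_change What_eq_W1_if_ff_nonpos What_eq_Wq_if_ff_nonneg[OF assms]
  by (auto simp: finf_less_0_iff fsup_greater_0_iff not_less[symmetric])

lemma singLagrangian_What:
  assumes "singLagrangian q \<gamma> \<delta> eps k" "Wset q \<gamma> eps k \<noteq> {}"
  shows "let C = (if \<gamma> q < 0 then {Wcirc q \<gamma> \<delta> eps k, W1 q \<gamma> \<delta> eps k, Wq q \<gamma> \<delta> eps k}
                 else {Wcirc q \<gamma> \<delta> eps k, W1 q \<gamma> \<delta> eps k})
    in What q \<gamma> \<delta> eps k \<in> C \<and> What q \<gamma> \<delta> eps k \<noteq> {} \<and>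
       (\<forall>X\<in>C. X \<noteq> {} \<longrightarrow> X = What q \<gamma> \<delta> eps k)"
proof -
  have "(What q \<gamma> \<delta> eps k = Wcirc q \<gamma> \<delta> eps k \<and> Wcirc q \<gamma> \<delta> eps k \<noteq> {}) \<or>
        (What q \<gamma> \<delta> eps k = W1 q \<gamma> \<delta> eps k \<and> W1 q \<gamma> \<delta> eps k \<noteq> {}) \<or>
        (\<gamma> q < 0 \<and> What q \<gamma> \<delta> eps k = Wq q \<gamma> \<delta> eps k \<and> Wq q \<gamma> \<delta> eps k \<noteq> {})"
  proof (cases "\<gamma> q > 0")
    case True
    then show ?thesis
      using gamma_q_pos_cases assms by (auto simp: singLagrangian_def not_less[symmetric])
  next
    case False
    then have "\<gamma> q < 0" using gamma_q_nonzero by simp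
    then show ?thesis using gamma_q_neg_cases by (meson not_less)
  qed
  moreover have "W1 q \<gamma> \<delta> eps k \<noteq> {} \<Longrightarrow> W1 q \<gamma> \<delta> eps k = What q \<gamma> \<delta> eps k"
    using Wlam_eq_What[OF inverse_gamma_1_in_LamSet] by (simp add: W1_def)
  moreover have "\<gamma> q < 0 \<Longrightarrow> Wq q \<gamma> \<delta> eps k \<noteq> {} \<Longrightarrow> Wq q \<gamma> \<delta> eps k = What q \<gamma> \<delta> eps k"
    using Wlam_eq_What[OF inverse_gamma_q_in_LamSet] by (simp add: Wq_def)
  ultimately show ?thesis
    using Wcirc_eq_What unfolding Let_def by (auto split: if_splits)
qed

lemma Wcirc_solution:
  assumes "\<not> multLagrangian q \<gamma> \<delta> eps k"
    and "What q \<gamma> \<delta> eps k = Wcirc q \<gamma> \<delta> eps k" "What q \<gamma> \<delta> eps k \<noteq> {}"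
  shows "(\<exists>!lam. lam \<in> interior (LamSet q \<gamma>) \<and> ff q \<gamma> \<delta> eps k lam = 0) \<and>
    (\<forall>lam\<in>interior (LamSet q \<gamma>). ff q \<gamma> \<delta> eps k lam = 0 \<longrightarrow>
       Linf q \<gamma> \<delta> eps k = lam\<^sup>2 * ((lc \<gamma> \<delta> eps 0)\<^sup>2 +
         (\<Sum>i=1..q. inverse ((1 - lam * \<gamma> i)\<^sup>2) * (lc \<gamma> \<delta> eps i)\<^sup>2)) \<and>
       What q \<gamma> \<delta> eps k = {wlam q \<gamma> \<delta> eps lam})"
proof -
  have root: "Wlam q \<gamma> \<delta> eps k l = {wlam q \<gamma> \<delta> eps l} \<and>
      What q \<gamma> \<delta> eps k = {wlam q \<gamma> \<delta> eps l} \<and>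
      Linf q \<gamma> \<delta> eps k = Lf q \<delta> eps (wlam q \<gamma> \<delta> eps l)"
    if "l \<in> interior (LamSet q \<gamma>)" "ff q \<gamma> \<delta> eps k l = 0" for l
  proof -
    have "Wlam q \<gamma> \<delta> eps k l = {wlam q \<gamma> \<delta> eps l}"
      using that Wlam_eq_wlam[OF interior_LamSet_invertible[OF that(1)]] by simp
    then show ?thesis
      using Wlam_minimisers_LamSet[OF subsetD[OF interior_subset that(1)]] by simp
  qed
  obtain l where l: "l \<in> interior (LamSet q \<gamma>)" "Wlam q \<gamma> \<delta> eps k l \<noteq> {}"
    using assms(2,3) by (auto simp: Wcirc_def)
  then have l_root: "ff q \<gamma> \<delta> eps k l = 0"
    using Wlam_eq_wlam[OF interior_LamSet_invertible[OF l(1)]] by (simp split: if_splits)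
  have unique: "l' = l" if "l' \<in> interior (LamSet q \<gamma>)" "ff q \<gamma> \<delta> eps k l' = 0" for l'
  proof (rule ccontr)
    assume "l' \<noteq> l"
    have "wlam q \<gamma> \<delta> eps l' = wlam q \<gamma> \<delta> eps l"
      using root[OF that] root[OF l(1) l_root] by simp
    then have "wlam q \<gamma> \<delta> eps l \<in> Wlam q \<gamma> \<delta> eps k l'" "wlam q \<gamma> \<delta> eps l \<in> Wlam q \<gamma> \<delta> eps k l"
      using root[OF that] root[OF l(1) l_root] by simp_all
    then show False
      using Wlam_two_multipliers_multLagrangian[OF \<open>l' \<noteq> l\<close>] assms(1) by blast
  qed
  show ?thesis
  proof (intro conjI ballI impI)
    show "\<exists>!lam. lam \<in> interior (LamSet q \<gamma>) \<and> ff q \<gamma> \<delta> eps k lam = 0"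
      using l(1) l_root unique by blast
  next
    fix lam assume "lam \<in> interior (LamSet q \<gamma>)" "ff q \<gamma> \<delta> eps k lam = 0"
    then show "Linf q \<gamma> \<delta> eps k = lam\<^sup>2 * ((lc \<gamma> \<delta> eps 0)\<^sup>2 +
         (\<Sum>i=1..q. inverse ((1 - lam * \<gamma> i)\<^sup>2) * (lc \<gamma> \<delta> eps i)\<^sup>2))"
      "What q \<gamma> \<delta> eps k = {wlam q \<gamma> \<delta> eps lam}"
      using root Lf_wlam[OF interior_LamSet_invertible] by simp_all
  qed
qed

lemma nonLagrangian_solution:
  assumes "nonLagrangian q \<gamma> \<delta> eps k"
  shows "Wcirc q \<gamma> \<delta> eps k = {} \<and> W1 q \<gamma> \<delta> eps k = {} \<and>
    Wset q \<gamma> eps k = {(\<lambda>_. 0)} \<and>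
    Linf q \<gamma> \<delta> eps k = (\<Sum>i=1..q. inverse ((\<gamma> i)\<^sup>2) * (lc \<gamma> \<delta> eps i)\<^sup>2) \<and>
    Linf q \<gamma> \<delta> eps k > 0 \<and>
    What q \<gamma> \<delta> eps k = {(\<lambda>_. 0)}"
proof -
  have eps: "eps = 0" and k: "k = 0" and "\<gamma> q > 0" and nonzero: "\<exists>i\<in>{1..q}. \<delta> i \<noteq> 0"
    using assms by (auto simp: nonLagrangian_def)
  then have gamma_pos: "\<gamma> i > 0" if "i \<in> {1..q}" for i using gamma_le[of i q] that by auto
  have zero_V: "(\<lambda>_. 0) \<in> Vsp q eps" by (simp add: Vsp_iff)
  have W: "Wset q \<gamma> eps k = {(\<lambda>_. 0)}"
  proof (intro equalityI subsetI)
    fix w assume "w \<in> Wset q \<gamma> eps k"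
    then have "w \<in> Vsp q eps" "(\<Sum>i=1..q. \<gamma> i * (w i)\<^sup>2) = 0"
      using eps k by (auto simp: Wset_def Qf_eq)
    moreover have "(\<Sum>i=1..q. \<gamma> i * (w i)\<^sup>2) = 0 \<longleftrightarrow> (\<forall>i\<in>{1..q}. \<gamma> i * (w i)\<^sup>2 = 0)"
      using gamma_pos by (intro sum_nonneg_eq_0_iff) (auto simp: less_imp_le)
    ultimately have terms: "\<forall>i\<in>{1..q}. \<gamma> i * (w i)\<^sup>2 = 0" by blast
    have "w i = 0" if "i \<in> {1..q}" for i
      using terms[rule_format, OF that] gamma_pos[OF that] by simp
    then have "w \<in> Vsp q eps" "\<forall>i\<in>{1..q}. w i = 0"
      using \<open>w \<in> Vsp q eps\<close> by auto
    then show "w \<in> {\<lambda>_. 0}" using Vsp_eqI[OF _ zero_V] eps by (simp add: Vsp_iff)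
  qed (use eps k zero_V in \<open>simp add: Wset_def Qf_eq\<close>)
  have "Wlam q \<gamma> \<delta> eps k l = {}" for l
  proof -
    have "w \<notin> Wlam q \<gamma> \<delta> eps k l" for w
    proof
      assume w: "w \<in> Wlam q \<gamma> \<delta> eps k l"
      then have "w = (\<lambda>_. 0)" using W by (auto simp: Wlam_def)
      then show False using w nonzero by (auto simp: Wlam_iff)
    qed
    then show ?thesis by blast
  qed
  moreover have Linf: "Linf q \<gamma> \<delta> eps k = Lf q \<delta> eps (\<lambda>_. 0)"
    using W by (simp add: Linf_def)
  moreover have "Lf q \<delta> eps (\<lambda>_. 0) = (\<Sum>i=1..q. (\<delta> i)\<^sup>2)"
    using zero_V by (simp add: Lf_eq)
  moreover have "(\<Sum>i=1..q. (\<delta> i)\<^sup>2) = (\<Sum>i=1..q. inverse ((\<gamma> i)\<^sup>2) * (lc \<gamma> \<delta> eps i)\<^sup>2)"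
  proof (rule sum.cong)
    fix i assume "i \<in> {1..q}"
    then show "(\<delta> i)\<^sup>2 = inverse ((\<gamma> i)\<^sup>2) * (lc \<gamma> \<delta> eps i)\<^sup>2"
      using gamma_pos[of i] by (simp add: lc_def power_mult_distrib)
  qed simp
  moreover have "(\<Sum>i=1..q. (\<delta> i)\<^sup>2) > 0"
  proof -
    obtain j where "j \<in> {1..q}" "\<delta> j \<noteq> 0" using nonzero by blast
    then have "0 < (\<delta> j)\<^sup>2" "(\<delta> j)\<^sup>2 \<le> (\<Sum>i=1..q. (\<delta> i)\<^sup>2)"
      by (auto intro: member_le_sum)
    then show ?thesis by linarith
  qed
  ultimately show ?thesis using W by (auto simp: Wcirc_def W1_def What_def)
qed

lemma multLagrangian_solution:
  assumes "multLagrangian q \<gamma> \<delta> eps k"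
  shows "Linf q \<gamma> \<delta> eps k = 0 \<and>
    What q \<gamma> \<delta> eps k = {(\<lambda>_. 0)} \<and> Wcirc q \<gamma> \<delta> eps k = {(\<lambda>_. 0)} \<and>
    W1 q \<gamma> \<delta> eps k = {(\<lambda>_. 0)} \<and>
    (\<gamma> q < 0 \<longrightarrow> Wq q \<gamma> \<delta> eps k = {(\<lambda>_. 0)})"
proof -
  have eps: "eps = 0" and k: "k = 0" and delta: "\<forall>i\<in>{1..q}. \<delta> i = 0"
    using assms by (auto simp: multLagrangian_def)
  have zero_V: "(\<lambda>_. 0) \<in> Vsp q eps" by (simp add: Vsp_iff)
  have zero_Wlam: "(\<lambda>_. 0) \<in> Wlam q \<gamma> \<delta> eps k l" for l
    using zero_V eps k delta by (simp add: Wlam_iff Qf_eq)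
  have w0v: "w0v q \<delta> = (\<lambda>_. 0)" using delta by (auto simp: w0v_def)
  have Linf: "Linf q \<gamma> \<delta> eps k = 0"
    using Wlam_minimisers_LamSet(1)[OF inverse_gamma_1_in_LamSet zero_Wlam]
      Lf_eq_0_iff[OF zero_V] w0v by simp
  have What: "What q \<gamma> \<delta> eps k = {(\<lambda>_. 0)}"
  proof (intro equalityI subsetI)
    fix w :: "nat \<Rightarrow> real" assume "w \<in> What q \<gamma> \<delta> eps k"
    then have "w \<in> Vsp q eps" "Lf q \<delta> eps w = 0" using Linf by (auto simp: What_def Wset_def)
    then show "w \<in> {\<lambda>_. 0}" using Lf_eq_0_iff w0v by simp
  next
    fix w :: "nat \<Rightarrow> real" assume "w \<in> {\<lambda>_. 0}"
    then show "w \<in> What q \<gamma> \<delta> eps k"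
      using zero_Wlam[of 0] Linf Lf_eq_0_iff[OF zero_V] w0v by (auto simp: What_def Wlam_def)
  qed
  have Wlam: "Wlam q \<gamma> \<delta> eps k l = What q \<gamma> \<delta> eps k" if "l \<in> LamSet q \<gamma>" for l
    using Wlam_eq_What[OF that] zero_Wlam by blast
  have "Wcirc q \<gamma> \<delta> eps k \<noteq> {}"
    using zero_Wlam zero_in_interior_LamSet by (auto simp: Wcirc_def)
  then show ?thesis
    using Linf What Wcirc_eq_What Wlam[OF inverse_gamma_1_in_LamSet] Wlam[OF inverse_gamma_q_in_LamSet]
    by (simp add: W1_def Wq_def)
qed

end

theorem theorem8p1:
  fixes q :: nat and \<gamma> \<delta> :: "nat \<Rightarrow> real" and k eps :: real
  assumes q: "q \<ge> 1"
    and dec: "\<forall>i j. 1 \<le> i \<longrightarrow> i < j \<longrightarrow> j \<le> q \<longrightarrow> \<gamma> j < \<gamma> i"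
    and nz: "\<forall>i\<in>{1..q}. \<gamma> i \<noteq> 0"
    and g1: "\<gamma> 1 > 0"
    and dpos: "\<forall>i\<in>{1..q}. \<delta> i \<ge> 0"
    and epos: "eps \<ge> 0"
    and Wne: "Wset q \<gamma> eps k \<noteq> {}"
  shows
   "(nonLagrangian q \<gamma> \<delta> eps k \<longrightarrow>
       Wcirc q \<gamma> \<delta> eps k = {} \<and> W1 q \<gamma> \<delta> eps k = {} \<and>
       Wset q \<gamma> eps k = {(\<lambda>_. 0)} \<and>
       Linf q \<gamma> \<delta> eps k = (\<Sum>i=1..q. inverse ((\<gamma> i)^2) * (lc \<gamma> \<delta> eps i)^2) \<and>
       Linf q \<gamma> \<delta> eps k > 0 \<and>
       What q \<gamma> \<delta> eps k = {(\<lambda>_. 0)})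
  \<and> (multLagrangian q \<gamma> \<delta> eps k \<longrightarrow>
       Linf q \<gamma> \<delta> eps k = 0 \<and>
       What q \<gamma> \<delta> eps k = {(\<lambda>_. 0)} \<and> Wcirc q \<gamma> \<delta> eps k = {(\<lambda>_. 0)} \<and>
       W1 q \<gamma> \<delta> eps k = {(\<lambda>_. 0)} \<and>
       (\<gamma> q < 0 \<longrightarrow> Wq q \<gamma> \<delta> eps k = {(\<lambda>_. 0)}))
  \<and> (singLagrangian q \<gamma> \<delta> eps k \<longrightarrow>
       (let C = (if \<gamma> q < 0 then {Wcirc q \<gamma> \<delta> eps k, W1 q \<gamma> \<delta> eps k, Wq q \<gamma> \<delta> eps k}
                 else {Wcirc q \<gamma> \<delta> eps k, W1 q \<gamma> \<delta> eps k})
        in What q \<gamma> \<delta> eps k \<in> C \<and> What q \<gamma> \<delta> eps k \<noteq> {} \<and>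
           (\<forall>X\<in>C. X \<noteq> {} \<longrightarrow> X = What q \<gamma> \<delta> eps k))
     \<and> (\<gamma> q > 0 \<longrightarrow>
          finf q \<gamma> \<delta> eps k < 0 \<and>
          (fsup q \<gamma> \<delta> eps k > 0 \<longrightarrow> What q \<gamma> \<delta> eps k = Wcirc q \<gamma> \<delta> eps k) \<and>
          (fsup q \<gamma> \<delta> eps k \<le> 0 \<longrightarrow> What q \<gamma> \<delta> eps k = W1 q \<gamma> \<delta> eps k))
     \<and> (\<gamma> q < 0 \<longrightarrow>
          (finf q \<gamma> \<delta> eps k < 0 \<and> 0 < fsup q \<gamma> \<delta> eps k \<longrightarrow>
              What q \<gamma> \<delta> eps k = Wcirc q \<gamma> \<delta> eps k) \<and>
          (fsup q \<gamma> \<delta> eps k \<le> 0 \<longrightarrow> What q \<gamma> \<delta> eps k = W1 q \<gamma> \<delta> eps k) \<and>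
          (finf q \<gamma> \<delta> eps k \<ge> 0 \<longrightarrow> What q \<gamma> \<delta> eps k = Wq q \<gamma> \<delta> eps k))
     \<and> (What q \<gamma> \<delta> eps k = Wcirc q \<gamma> \<delta> eps k \<longrightarrow>
          (\<exists>!lam. lam \<in> interior (LamSet q \<gamma>) \<and> ff q \<gamma> \<delta> eps k lam = 0) \<and>
          (\<forall>lam\<in>interior (LamSet q \<gamma>). ff q \<gamma> \<delta> eps k lam = 0 \<longrightarrow>
             Linf q \<gamma> \<delta> eps k = lam^2 * ((lc \<gamma> \<delta> eps 0)^2 +
                 (\<Sum>i=1..q. inverse ((1 - lam * \<gamma> i)^2) * (lc \<gamma> \<delta> eps i)^2)) \<and>
             What q \<gamma> \<delta> eps k = {wlam q \<gamma> \<delta> eps lam}))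
     \<and> (What q \<gamma> \<delta> eps k = W1 q \<gamma> \<delta> eps k \<longrightarrow>
          (let \<zeta> = sqrt (- f1 q \<gamma> \<delta> eps k / \<gamma> 1) in
             \<zeta> \<ge> 0 \<and>
             Linf q \<gamma> \<delta> eps k = inverse ((\<gamma> 1)^2) * ((lc \<gamma> \<delta> eps 0)^2 +
                 (\<Sum>i=2..q. inverse ((1 - \<gamma> i / \<gamma> 1)^2) * (lc \<gamma> \<delta> eps i)^2)) + \<zeta>^2 \<and>
             What q \<gamma> \<delta> eps k = {pt1 q \<gamma> \<delta> eps \<zeta>, pt1 q \<gamma> \<delta> eps (- \<zeta>)}))
     \<and> (\<gamma> q < 0 \<and> What q \<gamma> \<delta> eps k = Wq q \<gamma> \<delta> eps k \<longrightarrow>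
          (let \<zeta> = sqrt (fq q \<gamma> \<delta> eps k / (- \<gamma> q)) in
             \<zeta> \<ge> 0 \<and>
             Linf q \<gamma> \<delta> eps k = inverse ((\<gamma> q)^2) * ((lc \<gamma> \<delta> eps 0)^2 +
                 (\<Sum>i=1..q-1. inverse ((1 - \<gamma> i / \<gamma> q)^2) * (lc \<gamma> \<delta> eps i)^2)) + \<zeta>^2 \<and>
             What q \<gamma> \<delta> eps k = {ptq q \<gamma> \<delta> eps \<zeta>, ptq q \<gamma> \<delta> eps (- \<zeta>)})))"
proof -
  interpret canonical_form q \<gamma> \<delta> k eps using q dec nz g1 by unfold_locales
  have sing: "What q \<gamma> \<delta> eps k \<noteq> {}" "\<not> nonLagrangian q \<gamma> \<delta> eps k" "\<not> multLagrangian q \<gamma> \<delta> eps k"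
    if "singLagrangian q \<gamma> \<delta> eps k"
    using singLagrangian_What[OF that Wne] that by (auto simp: Let_def singLagrangian_def)
  show ?thesis
    apply (rule conjI[OF impI conjI[OF impI impI]])
      apply (fact nonLagrangian_solution)
     apply (fact multLagrangian_solution)
    subgoal premises s
      apply (intro conjI)
      subgoal by (rule singLagrangian_What[OF s Wne])
      subgoal using gamma_q_pos_cases[OF _ Wne sing(2,3)[OF s]] by blast
      subgoal using gamma_q_neg_cases by simp
      subgoal using Wcirc_solution[OF sing(3)[OF s] _ sing(1)[OF s]] by blast
      subgoal using W1_solution[OF _ sing(1)[OF s]] by blast
      subgoal using Wq_solution[OF _ _ sing(1)[OF s]] by blast
      done
    done
qed

end
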